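(* Let $V\in\mathcal{V}$, $\epsilon,c,c_1,c_2\in(0,\mathcal{L}_V(0))$, and $\alpha=\sqrt{\tau_V(c)\lambda_V(c)}$. Then \[\frac{\alpha}{\alpha+A}\,T_V\Big(c+\frac{A+\alpha}{Ae^{A\alpha}}\Big)\le\tau_V(c)\le T_V\Big(\frac{c}{1+c}\Big)\quad\forall A>0,\] and \[T_V\big(c_1+c_2e^{-T_V(\epsilon)\lambda_V(c_1)}+2\epsilon e^{-B}\big)\le T_V(\epsilon)+\frac{2B}{\lambda_V(c_2)}\quad\forall B>0.\] In particular, \[\tau_V(2\delta)\le T_V(\delta)\le\frac{6}{\delta^2}\tau_V(\delta/2)\quad\text{for all }0<\delta<\tfrac12(\mathcal{L}_V(0)\wedge1).\]
   Context: $\mathcal{V}$ is the class of non-decreasing right-continuous $V:(0,\infty)\to\mathbb{R}$ with $\lim_{\lambda\to0^+}V(\lambda)=0$, $\lim_{\lambda\to\infty}V(\lambda)<\infty$; $\mathcal{L}_V(t)=\int_{(0,\infty)}e^{-t\lambda}dV(\lambda)$. $T_V(\epsilon)=\min\{t\ge0:\mathcal{L}_V(t)\le\epsilon\}$ (with $T_V(\epsilon)=0$ if $\mathcal{L}_V(0)\le\epsilon$). For $c\in(0,\mathcal{L}_V(0))$: $\lambda_V(c)=\inf\{\lambda:V(\lambda)>c\}$, $\tau_V(c)=\sup_{\lambda\ge\lambda_V(c)}\lambda^{-1}\log(1+V(\lambda))$. $a\wedge b=\min\{a,b\}$. *)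

theory Defs
  imports "HOL-Analysis.Analysis"
begin

definition classV :: "(real \<Rightarrow> real) \<Rightarrow> bool" where
  "classV V \<longleftrightarrow> mono_on {0<..} V
     \<and> (\<forall>l>0. continuous (at_right l) V)
     \<and> (V \<longlongrightarrow> 0) (at_right 0)
     \<and> (\<exists>L. (V \<longlongrightarrow> L) at_top)"

text \<open>Extension of V by 0 on (-inf,0], so that the Lebesgue-Stieltjes measure
  dV on the real line is given by interval_measure and lives on (0,inf).\<close>
definition Vext :: "(real \<Rightarrow> real) \<Rightarrow> real \<Rightarrow> real" where
  "Vext V x = (if x \<le> 0 then 0 else V x)"

definition LV :: "(real \<Rightarrow> real) \<Rightarrow> real \<Rightarrow> real" where
  "LV V t = (LINT l:{0<..}|interval_measure (Vext V). exp (- t * l))"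

definition TV :: "(real \<Rightarrow> real) \<Rightarrow> real \<Rightarrow> real" where
  "TV V eps = (LEAST t. t \<ge> 0 \<and> LV V t \<le> eps)"

definition lamV :: "(real \<Rightarrow> real) \<Rightarrow> real \<Rightarrow> real" where
  "lamV V c = Inf {l. l > 0 \<and> V l > c}"

definition tauV :: "(real \<Rightarrow> real) \<Rightarrow> real \<Rightarrow> real" where
  "tauV V c = (SUP l\<in>{lamV V c..}. ln (1 + V l) / l)"

end

theory Submission imports Defs "HOL-Probability.Distribution_Functions"
begin

text \<open>
  Below \<lambda>_V(c) the measure dV has mass at most c, and from
  \<lambda>_V(c) on one has V(\<lambda>) \<le> exp(\<tau>_V(c)\<lambda>). Splitting the Laplace integral at \<lambda>_V(c)
  and integrating the tail by parts (Fubini) gives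
  L_V(t) \<le> c + t exp(-(t - \<tau>)\<lambda>) / (t - \<tau>) for t > \<tau> = \<tau>_V(c); the choice
  t = \<tau>(\<alpha> + A)/\<alpha> yields the lower bound for \<tau>_V(c). The upper bound comes from
  V(\<lambda>) exp(-T\<lambda>) \<le> L_V(T), and the estimate with B from splitting the integral at
  \<lambda>_V(c1) and \<lambda>_V(c2). The final pair of inequalities specialises these to c = 2\<delta>,
  and to c = \<delta>/2 with A = (6/\<delta>^2 - 1)\<alpha>, using \<tau>_V(c)\<lambda>_V(c) \<ge> ln(1 + c).
\<close>

lemma div_one_plus_le_ln_one_plus:
  fixes y :: real
  assumes "-1 < y"
  shows "y / (1 + y) \<le> ln (1 + y)"
proof -
  have "ln (1 / (1 + y)) \<le> 1 / (1 + y) - 1" using assms by (intro ln_le_minus_one) auto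
  moreover have "ln (1 / (1 + y)) = - ln (1 + y)" using assms by (simp add: ln_div)
  moreover have "1 / (1 + y) - 1 = - (y / (1 + y))" using assms by (simp add: field_simps)
  ultimately show ?thesis by linarith
qed

lemma six_div_square_exp_estimate:
  fixes d x :: real
  assumes d: "0 < d" "d < 1/2" and x: "2*d/5 \<le> x"
  shows "(6/d^2) / (6/d^2 - 1) / exp ((6/d^2 - 1) * x) \<le> d/2"
proof -
  define r where "r = 6/d^2"
  have "d * d \<le> (1/2) * (1/2)" using d by (intro mult_mono) auto
  then have "d^2 \<le> 1/4" by (simp add: power2_eq_square)
  then have "1 \<le> 1/d^2" and r24: "24 \<le> r" using d by (simp_all add: r_def field_simps)
  then have "5/d^2 \<le> r - 1" unfolding r_def by (simp add: field_simps)
  then have "(5/d^2) * (2*d/5) \<le> (r - 1) * x"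
    using x d r24 by (intro mult_mono) auto
  moreover have "(5/d^2) * (2*d/5) = 2/d" using d by (simp add: power2_eq_square field_simps)
  ultimately have z: "2/d \<le> (r - 1) * x" by simp
  have "(1 + 1/d)^2 \<le> exp (1/d)^2"
    using d by (intro power_mono exp_ge_add_one_self) (auto simp: add_pos_pos)
  also have "\<dots> = exp (2/d)" by (simp add: power2_eq_square exp_add[symmetric])
  also have "\<dots> \<le> exp ((r - 1) * x)" using z by simp
  finally have e: "(1 + 1/d)^2 \<le> exp ((r - 1) * x)" .
  have q: "r / (r - 1) \<le> 6/5" using r24 by (simp add: field_simps)
  have "0 < 1 + 1/d" using d by (intro add_pos_pos) auto
  then have w: "0 < (1 + 1/d)^2" by simp
  have "r / (r - 1) / exp ((r - 1) * x) \<le> (6/5) / (1 + 1/d)^2"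
    by (rule frac_le[OF _ q w e]) simp
  also have "\<dots> = 6 * d^2 / (5 * (d + 1)^2)" using d by (simp add: field_simps power2_eq_square)
  also have "\<dots> \<le> d/2"
  proof -
    have "1 + 2 * d \<le> (d + 1)^2" by (simp add: power2_eq_square algebra_simps)
    then have "12 * d \<le> 5 * (d + 1)^2" using d by linarith
    have "6 * d^2 = (d/2) * (12 * d)" by (simp add: power2_eq_square)
    also have "\<dots> \<le> (d/2) * (5 * (d + 1)^2)" using \<open>12 * d \<le> _\<close> d by (intro mult_left_mono) auto
    finally have "6 * d^2 \<le> (d/2) * (5 * (d + 1)^2)" .
    then show ?thesis using d by (simp add: pos_divide_le_eq)
  qed
  finally show ?thesis unfolding r_def .
qed

lemma antitone_sublevel_has_least:
  fixes f :: "real \<Rightarrow> real"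
  assumes anti: "\<And>s t. 0 \<le> s \<Longrightarrow> s \<le> t \<Longrightarrow> f t \<le> f s"
    and right_cont: "\<And>t. 0 \<le> t \<Longrightarrow> (\<lambda>n. f (t + inverse (real (Suc n)))) \<longlonglongrightarrow> f t"
    and "0 \<le> t1" "f t1 \<le> eps"
  shows "\<exists>t0. 0 \<le> t0 \<and> f t0 \<le> eps \<and> (\<forall>t. 0 \<le> t \<and> f t \<le> eps \<longrightarrow> t0 \<le> t)"
proof -
  define S where "S = {t. 0 \<le> t \<and> f t \<le> eps}"
  have ne: "S \<noteq> {}" using assms(3,4) by (auto simp: S_def)
  have bdd: "bdd_below S" unfolding S_def by (rule bdd_belowI[of _ 0]) auto
  have t0: "0 \<le> Inf S" using ne by (intro cInf_greatest) (auto simp: S_def)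
  have "f (Inf S + inverse (real (Suc n))) \<le> eps" for n
  proof -
    obtain s where "s \<in> S" "s < Inf S + inverse (real (Suc n))"
      using cInf_lessD[OF ne, of "Inf S + inverse (real (Suc n))"] by auto
    then show ?thesis using anti[of s "Inf S + inverse (real (Suc n))"] by (auto simp: S_def)
  qed
  then have "f (Inf S) \<le> eps" by (intro LIMSEQ_le_const2[OF right_cont[OF t0]]) auto
  with t0 bdd show ?thesis by (intro exI[of _ "Inf S"]) (auto simp: S_def intro: cInf_lower)
qed

lemma integral_exp_tail_le:
  fixes M :: "real measure"
  assumes "finite_measure M" and sets_M: "sets M = sets borel"
    and lam: "0 \<le> lam" and \<tau>: "0 \<le> \<tau>" "\<tau> < t"
    and distr: "\<And>s. lam \<le> s \<Longrightarrow> measure M {lam..s} \<le> exp (\<tau> * s)"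
  shows "(\<integral>x. indicator {lam..} x * exp (- t * x) \<partial>M) \<le> t / (t - \<tau>) * exp (- (t - \<tau>) * lam)"
proof -
  interpret fm: finite_measure M by fact
  note sets_M [measurable_cong]
  interpret p: pair_sigma_finite M lborel
    unfolding pair_sigma_finite_def using fm.sigma_finite_measure_axioms sigma_finite_lborel by simp
  have tpos: "0 < t" using \<tau> by simp
  define f where "f x = indicator {lam..} x * exp (- t * x)" for x :: real
  define G :: "real \<Rightarrow> real \<Rightarrow> ennreal"
    where "G x s = (if lam \<le> x \<and> x \<le> s then ennreal (t * exp (- t * s)) else 0)" for x s
  have "f \<in> borel_measurable M" unfolding f_def by measurable
  then have "integrable M f"
    using lam tpos by (intro fm.integrable_const_bound[where B=1])
      (auto simp: f_def indicator_def mult_nonneg_nonneg)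
  then have "ennreal (integral\<^sup>L M f) = (\<integral>\<^sup>+ x. ennreal (f x) \<partial>M)"
    by (rule nn_integral_eq_integral[symmetric]) (auto simp: f_def)
  also have "\<dots> = (\<integral>\<^sup>+ x. (\<integral>\<^sup>+ s. G x s \<partial>lborel) \<partial>M)"
  proof (rule nn_integral_cong)
    fix x :: real
    have "((\<lambda>s. t * exp (- t * s)) has_integral (t * (exp (- t * x) / t))) {x..}"
      by (rule has_integral_mult_right[OF has_integral_exp_minus_to_infinity[OF tpos]])
    then have "(\<integral>\<^sup>+ s. ennreal (t * exp (- t * s)) * indicator {x..} s \<partial>lborel)
        = ennreal (t * (exp (- t * x) / t))"
      by (rule nn_integral_has_integral_lebesgue'[rotated]) (use tpos in auto)
    moreover have "lam \<le> x \<Longrightarrow> (\<integral>\<^sup>+ s. G x s \<partial>lborel)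
        = (\<integral>\<^sup>+ s. ennreal (t * exp (- t * s)) * indicator {x..} s \<partial>lborel)"
      by (intro nn_integral_cong) (auto simp: G_def indicator_def)
    ultimately show "ennreal (f x) = (\<integral>\<^sup>+ s. G x s \<partial>lborel)"
      using tpos by (cases "lam \<le> x") (auto simp: f_def G_def)
  qed
  also have "\<dots> = (\<integral>\<^sup>+ s. (\<integral>\<^sup>+ x. G x s \<partial>M) \<partial>lborel)"
    by (rule p.Fubini'[symmetric]) (unfold G_def, measurable)
  also have "\<dots> \<le> (\<integral>\<^sup>+ s. ennreal (t * exp (- (t - \<tau>) * s)) * indicator {lam..} s \<partial>lborel)"
  proof (rule nn_integral_mono)
    fix s :: real
    have "(\<integral>\<^sup>+ x. G x s \<partial>M) = ennreal (t * exp (- t * s)) * emeasure M {lam..s}"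
      by (subst nn_integral_cmult_indicator[symmetric])
        (auto simp: sets_M intro!: nn_integral_cong simp: G_def indicator_def)
    also have "\<dots> \<le> ennreal (t * exp (- (t - \<tau>) * s)) * indicator {lam..} s"
    proof (cases "lam \<le> s")
      case True
      have "emeasure M {lam..s} \<le> ennreal (exp (\<tau> * s))"
        using distr[OF True] by (simp add: fm.emeasure_eq_measure ennreal_leI)
      then have "ennreal (t * exp (- t * s)) * emeasure M {lam..s}
          \<le> ennreal (t * exp (- t * s)) * ennreal (exp (\<tau> * s))"
        by (rule mult_left_mono) simp
      also have "\<dots> = ennreal (t * exp (- (t - \<tau>) * s))"
        using tpos by (simp add: ennreal_mult'[symmetric] exp_add[symmetric] algebra_simps)
      finally show ?thesis using True by simp
    qed simp
    finally show "(\<integral>\<^sup>+ x. G x s \<partial>M) \<le> ennreal (t * exp (- (t - \<tau>) * s)) * indicator {lam..} s" .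
  qed
  also have "\<dots> = ennreal (t * (exp (- (t - \<tau>) * lam) / (t - \<tau>)))"
    using \<tau> by (intro nn_integral_has_integral_lebesgue' has_integral_mult_right
        has_integral_exp_minus_to_infinity) auto
  finally show ?thesis using \<tau> tpos unfolding f_def
    by (subst (asm) ennreal_le_iff) (auto simp: field_simps)
qed

lemma exp_le_three_piece_bound:
  fixes x T B l1 l2 :: real
  assumes x: "0 < x" and T: "0 \<le> T" and l2: "0 < l2" and B: "0 \<le> B"
  shows "exp (- (T + 2 * B / l2) * x)
    \<le> indicator {..<l1} x + indicator {..<l2} x * exp (- T * l1) + exp (- T * x) * exp (- 2 * B)"
proof -
  have step: "0 \<le> 2 * B / l2" using B l2 by simp
  have "0 \<le> 2 * B / l2 * x" using x by (intro mult_nonneg_nonneg[OF step]) simp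
  moreover have "- (T + 2 * B / l2) * x = - T * x - 2 * B / l2 * x" by (simp add: algebra_simps)
  ultimately have drop_B: "exp (- (T + 2 * B / l2) * x) \<le> exp (- T * x)"
    by (subst exp_le_cancel_iff) linarith
  consider "x < l1" | "l1 \<le> x" "x < l2" | "l2 \<le> x" by linarith
  then show ?thesis
  proof cases
    case 1
    have "exp (- T * x) \<le> 1" using x T by simp
    moreover have "indicator {..<l1} x = (1::real)" using 1 by simp
    moreover have "0 \<le> indicator {..<l2} x * exp (- T * l1) + exp (- T * x) * exp (- 2 * B)"
      by simp
    ultimately show ?thesis using drop_B by linarith
  next
    case 2
    have "exp (- T * x) \<le> exp (- T * l1)" using 2 T by (simp add: mult_left_mono)
    moreover have "indicator {..<l1} x = (0::real)" "indicator {..<l2} x * exp (- T * l1) = exp (- T * l1)"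
      using 2 by simp_all
    moreover have "0 \<le> exp (- T * x) * exp (- 2 * B)" by simp
    ultimately show ?thesis using drop_B by linarith
  next
    case 3
    have "2 * B = (2 * B / l2) * l2" using l2 by simp
    also have "\<dots> \<le> (2 * B / l2) * x" using 3 step by (intro mult_left_mono)
    finally have "exp (- (T + 2 * B / l2) * x) \<le> exp (- T * x) * exp (- 2 * B)"
      by (simp add: exp_add[symmetric] algebra_simps)
    moreover have "0 \<le> indicator {..<l1} x + indicator {..<l2} x * exp (- T * l1)" by simp
    ultimately show ?thesis by linarith
  qed
qed

locale classV_fun =
  fixes V :: "real \<Rightarrow> real"
  assumes classV: "classV V"
begin

definition Vlim :: real where "Vlim = (SOME L. (V \<longlongrightarrow> L) at_top)"

abbreviation dV :: "real measure" where "dV \<equiv> interval_measure (Vext V)"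

lemma V_mono: "0 < x \<Longrightarrow> x \<le> y \<Longrightarrow> V x \<le> V y"
  using classV unfolding classV_def mono_on_def by auto

lemma V_tendsto_Vlim: "(V \<longlongrightarrow> Vlim) at_top"
proof -
  have "\<exists>L. (V \<longlongrightarrow> L) at_top" using classV unfolding classV_def by blast
  then show ?thesis unfolding Vlim_def by (rule someI_ex)
qed

lemma V_nonneg: "0 < l \<Longrightarrow> 0 \<le> V l"
  using classV unfolding classV_def
  by (intro tendsto_upperbound[of V 0 "at_right 0"])
    (auto simp: eventually_at_right_field intro!: exI[of _ l] V_mono)

lemma V_le_Vlim: "0 < l \<Longrightarrow> V l \<le> Vlim"
  by (intro tendsto_lowerbound[OF V_tendsto_Vlim])
    (auto simp: eventually_at_top_linorder intro!: exI[of _ l] V_mono)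

lemma Vext_mono: "x \<le> y \<Longrightarrow> Vext V x \<le> Vext V y"
  unfolding Vext_def using V_mono V_nonneg by auto

lemma Vext_right_continuous: "continuous (at_right a) (Vext V)"
proof (cases "a < 0")
  case True
  have "\<forall>\<^sub>F x in at_right a. Vext V x = 0"
    using True by (auto simp: eventually_at_right_field Vext_def intro!: exI[of _ 0])
  with True show ?thesis
    unfolding continuous_within by (simp add: Vext_def tendsto_eventually)
next
  case False
  have "\<forall>\<^sub>F x in at_right a. V x = Vext V x"
    using False by (auto simp: eventually_at_right_field Vext_def intro!: exI[of _ "a + 1"])
  moreover have "(V \<longlongrightarrow> Vext V a) (at_right a)"
    using classV False by (cases "a = 0") (auto simp: classV_def Vext_def continuous_within)
  ultimately show ?thesis
    unfolding continuous_within by (rule tendsto_cong[THEN iffD1])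
qed

lemma Vext_at_bot: "(Vext V \<longlongrightarrow> 0) at_bot"
  by (rule tendsto_eventually) (auto simp: eventually_at_bot_linorder Vext_def intro!: exI[of _ 0])

lemma Vext_at_top: "(Vext V \<longlongrightarrow> Vlim) at_top"
  using V_tendsto_Vlim
  by (rule tendsto_cong[THEN iffD1, rotated])
    (auto simp: eventually_at_top_linorder Vext_def intro!: exI[of _ 1])

lemmas dV_facts = Vext_mono Vext_right_continuous Vext_at_bot

sublocale dV: finite_borel_measure dV
  using finite_borel_measure_interval_measure[OF dV_facts Vext_at_top]
    V_nonneg[of 1] V_le_Vlim[of 1] by simp

lemma measure_dV_atMost: "measure dV {..x} = Vext V x"
  by (rule measure_interval_measure_Iic[OF dV_facts])

lemma measure_dV_UNIV: "measure dV UNIV = Vlim"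
  using interval_measure_UNIV[OF dV_facts Vext_at_top] V_nonneg[of 1] V_le_Vlim[of 1]
  by (simp add: measure_def)

lemma measure_dV_greaterThanAtMost: "0 < x \<Longrightarrow> measure dV {0<..x} = V x"
  using measure_interval_measure_Ioc[of 0 x, OF _ Vext_mono Vext_right_continuous]
  by (simp add: Vext_def)

lemma measure_dV_atLeastAtMost_le:
  assumes "0 < a" "a \<le> x"
  shows "measure dV {a..x} \<le> V x"
proof -
  have "measure dV {a..x} \<le> measure dV {0<..x}"
    using assms(1) by (intro dV.finite_measure_mono) auto
  then show ?thesis using measure_dV_greaterThanAtMost assms by simp
qed

lemma integrable_dV_indicator [simp]: "A \<in> sets borel \<Longrightarrow> integrable dV (indicator A :: real \<Rightarrow> real)"
  by (rule dV.integrable_const_bound[where B=1]) auto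

lemma measure_dV_lessThan_le:
  assumes "0 < a" "0 \<le> c" "\<And>x. 0 < x \<Longrightarrow> x < a \<Longrightarrow> V x \<le> c"
  shows "measure dV {..<a} \<le> c"
proof (rule tendsto_upperbound)
  show "(Vext V \<longlongrightarrow> measure dV {..<a}) (at_left a)"
    using dV.cdf_at_left[of a] cdf_interval_measure[OF dV_facts] by simp
  show "\<forall>\<^sub>F x in at_left a. Vext V x \<le> c"
    using assms by (auto simp: eventually_at_left_field Vext_def intro!: exI[of _ 0])
qed simp

lemma LV_eq_integral: "LV V t = (\<integral>x. indicator {0<..} x * exp (- t * x) \<partial>dV)"
  unfolding LV_def set_lebesgue_integral_def by simp

lemma integrable_LV: "0 \<le> t \<Longrightarrow> integrable dV (\<lambda>x. indicator {0<..} x * exp (- t * x))"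
  by (intro dV.integrable_const_bound[where B=1]) (auto simp: indicator_def mult_nonneg_nonneg)

lemma LV_0: "LV V 0 = Vlim"
proof -
  have "measure dV {0<..} = measure dV UNIV - measure dV {..0}"
    by (subst dV.finite_measure_Diff[symmetric]) (auto intro: arg_cong[where f="measure dV"])
  then show ?thesis
    using measure_dV_UNIV measure_dV_atMost[of 0] by (simp add: LV_eq_integral Vext_def)
qed

lemma LV_le_integral:
  assumes "0 \<le> t" "integrable dV h" "\<And>x. 0 \<le> h x" "\<And>x. 0 < x \<Longrightarrow> exp (- t * x) \<le> h x"
  shows "LV V t \<le> integral\<^sup>L dV h"
  unfolding LV_eq_integral
  using assms by (intro integral_mono integrable_LV) (auto simp: indicator_def)

lemma LV_antimono: "0 \<le> s \<Longrightarrow> s \<le> t \<Longrightarrow> LV V t \<le> LV V s"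
  unfolding LV_eq_integral
  by (intro integral_mono integrable_LV) (auto simp: indicator_def mult_right_mono)

lemma LV_right_continuous:
  assumes "0 \<le> t"
  shows "(\<lambda>n. LV V (t + inverse (real (Suc n)))) \<longlonglongrightarrow> LV V t"
  unfolding LV_eq_integral
proof (rule integral_dominated_convergence[where w="indicator {0<..}"])
  have "(\<lambda>n. t + inverse (real (Suc n))) \<longlonglongrightarrow> t"
    using tendsto_add[OF tendsto_const LIMSEQ_inverse_real_of_nat, of t] by simp
  then show "AE x in dV. (\<lambda>n. indicator {0<..} x * exp (- (t + inverse (real (Suc n))) * x))
      \<longlonglongrightarrow> indicator {0<..} x * exp (- t * x)"
    by (intro AE_I2 tendsto_intros)
  show "AE x in dV. norm (indicator {0<..} x * exp (- (t + inverse (real (Suc n))) * x))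
      \<le> (indicator {0<..} x :: real)" for n
  proof -
    have "0 \<le> t + inverse (real (Suc n))" using assms by simp
    then show ?thesis by (intro AE_I2) (auto simp: indicator_def intro!: mult_nonpos_nonneg)
  qed
qed auto

lemma LV_tendsto_0: "(\<lambda>n. LV V (real n)) \<longlonglongrightarrow> 0"
proof -
  have "(\<lambda>n. \<integral>x. indicator {0<..} x * exp (- real n * x) \<partial>dV) \<longlonglongrightarrow> (\<integral>x. 0 \<partial>dV)"
  proof (rule integral_dominated_convergence[where w="indicator {0<..}"])
    show "AE x in dV. (\<lambda>n. indicator {0<..} x * exp (- real n * x)) \<longlonglongrightarrow> (0::real)"
    proof (rule AE_I2)
      fix x :: real
      have "0 < x \<Longrightarrow> (\<lambda>n. exp (- x) ^ n) \<longlonglongrightarrow> 0" by (intro LIMSEQ_power_zero) auto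
      then show "(\<lambda>n. indicator {0<..} x * exp (- real n * x)) \<longlonglongrightarrow> 0"
        by (cases "0 < x") (simp_all add: exp_of_nat_mult[symmetric] mult.commute)
    qed
  qed (auto intro!: AE_I2 simp: indicator_def)
  then show ?thesis unfolding LV_eq_integral by simp
qed

lemma TV_least:
  assumes "0 < eps"
  shows "0 \<le> TV V eps \<and> LV V (TV V eps) \<le> eps \<and> (\<forall>t. 0 \<le> t \<and> LV V t \<le> eps \<longrightarrow> TV V eps \<le> t)"
proof -
  obtain N where "LV V (real N) < eps"
    using order_tendstoD(2)[OF LV_tendsto_0 assms] by (auto simp: eventually_sequentially)
  then obtain t0 where "0 \<le> t0 \<and> LV V t0 \<le> eps \<and> (\<forall>t. 0 \<le> t \<and> LV V t \<le> eps \<longrightarrow> t0 \<le> t)"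
    using antitone_sublevel_has_least[OF LV_antimono LV_right_continuous, of "real N" eps] by auto
  moreover from this have "TV V eps = t0"
    unfolding TV_def by (intro Least_equality) auto
  ultimately show ?thesis by simp
qed

lemma TV_nonneg: "0 < eps \<Longrightarrow> 0 \<le> TV V eps"
  using TV_least by blast

lemma LV_TV_le: "0 < eps \<Longrightarrow> LV V (TV V eps) \<le> eps"
  using TV_least by blast

lemma TV_le: "0 < eps \<Longrightarrow> 0 \<le> t \<Longrightarrow> LV V t \<le> eps \<Longrightarrow> TV V eps \<le> t"
  using TV_least by blast

lemma TV_antimono: "0 < e1 \<Longrightarrow> e1 \<le> e2 \<Longrightarrow> TV V e2 \<le> TV V e1"
  using TV_le[of e2 "TV V e1"] TV_nonneg LV_TV_le by fastforce

lemma V_mult_exp_le_LV: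
  assumes "0 \<le> T" "0 < l"
  shows "V l * exp (- T * l) \<le> LV V T"
proof -
  have "V l * exp (- T * l) = (\<integral>x. indicator {0<..l} x * exp (- T * l) \<partial>dV)"
    using measure_dV_greaterThanAtMost[OF assms(2)] by simp
  also have "\<dots> \<le> LV V T"
    unfolding LV_eq_integral
  proof (rule integral_mono)
    show "integrable dV (\<lambda>x. indicator {0<..l} x * exp (- T * l))" by simp
    show "indicator {0<..l} x * exp (- T * l) \<le> indicator {0<..} x * exp (- T * x)" for x
      using assms by (auto simp: indicator_def intro: mult_left_mono)
  qed (use integrable_LV assms in auto)
  finally show ?thesis .
qed

lemma
  assumes "0 < c" "c < LV V 0"
  shows lamV_pos: "0 < lamV V c"
    and le_V_lamV: "c \<le> V (lamV V c)"
    and V_le_below_lamV: "\<And>l. 0 < l \<Longrightarrow> l < lamV V c \<Longrightarrow> V l \<le> c"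
    and less_V_above_lamV: "\<And>l. lamV V c < l \<Longrightarrow> c < V l"
proof -
  define S where "S = {l. 0 < l \<and> c < V l}"
  have lam: "lamV V c = Inf S" unfolding lamV_def S_def ..
  obtain N where N: "\<And>x. N \<le> x \<Longrightarrow> c < V x"
    using order_tendstoD(1)[OF V_tendsto_Vlim, of c] assms(2) LV_0
    by (auto simp: eventually_at_top_linorder)
  have "max N 1 \<in> S" using N[of "max N 1"] by (simp add: S_def)
  then have ne: "S \<noteq> {}" by blast
  have bdd: "bdd_below S" unfolding S_def by (rule bdd_belowI[of _ 0]) auto
  show above: "\<And>l. lamV V c < l \<Longrightarrow> c < V l"
  proof -
    fix l assume "lamV V c < l"
    then obtain s where "s \<in> S" "s < l" using cInf_lessD[OF ne] lam by metis
    then show "c < V l" using V_mono[of s l] by (auto simp: S_def)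
  qed
  show "\<And>l. 0 < l \<Longrightarrow> l < lamV V c \<Longrightarrow> V l \<le> c"
    using cInf_lower[OF _ bdd] lam by (force simp: S_def)
  obtain b where b: "0 < b" "\<And>y. 0 < y \<Longrightarrow> y < b \<Longrightarrow> V y < c"
    using order_tendstoD(2)[of V 0 "at_right 0" c] classV assms(1)
    by (auto simp: classV_def eventually_at_right_field)
  have "b \<le> Inf S" using b by (intro cInf_greatest[OF ne]) (force simp: S_def)
  then show pos: "0 < lamV V c" using b lam by simp
  have "(V \<longlongrightarrow> V (lamV V c)) (at_right (lamV V c))"
    using classV pos unfolding classV_def continuous_within by blast
  then show "c \<le> V (lamV V c)"
    by (rule tendsto_lowerbound)
      (auto simp: eventually_at_right_field intro!: exI[of _ "lamV V c + 1"] less_imp_le above)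
qed

lemma le_V_above_lamV: "0 < c \<Longrightarrow> c < LV V 0 \<Longrightarrow> lamV V c \<le> l \<Longrightarrow> c \<le> V l"
  using le_V_lamV less_V_above_lamV by (cases "l = lamV V c") (auto intro: less_imp_le)

lemma measure_dV_below_lamV: "0 < c \<Longrightarrow> c < LV V 0 \<Longrightarrow> measure dV {..<lamV V c} \<le> c"
  by (intro measure_dV_lessThan_le lamV_pos V_le_below_lamV) auto

lemma
  assumes "0 < c" "c < LV V 0"
  shows ln_div_le_tauV: "\<And>l. lamV V c \<le> l \<Longrightarrow> ln (1 + V l) / l \<le> tauV V c"
    and tauV_le: "\<And>X. (\<And>l. lamV V c \<le> l \<Longrightarrow> ln (1 + V l) / l \<le> X) \<Longrightarrow> tauV V c \<le> X"
proof -
  have "bdd_above ((\<lambda>l. ln (1 + V l) / l) ` {lamV V c..})"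
  proof (rule bdd_aboveI2)
    fix l assume "l \<in> {lamV V c..}"
    then have l: "lamV V c \<le> l" "0 < l" using lamV_pos[OF assms] by auto
    moreover have "0 \<le> V l" "V l \<le> Vlim" using V_nonneg V_le_Vlim l by auto
    ultimately have "0 \<le> ln (1 + V l)" "ln (1 + V l) \<le> ln (1 + Vlim)" by simp_all
    then show "ln (1 + V l) / l \<le> ln (1 + Vlim) / lamV V c"
      using l lamV_pos[OF assms] by (intro frac_le) auto
  qed
  then show "\<And>l. lamV V c \<le> l \<Longrightarrow> ln (1 + V l) / l \<le> tauV V c"
    unfolding tauV_def by (intro cSUP_upper) auto
  show "\<And>X. (\<And>l. lamV V c \<le> l \<Longrightarrow> ln (1 + V l) / l \<le> X) \<Longrightarrow> tauV V c \<le> X"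
    unfolding tauV_def by (rule cSUP_least) auto
qed

lemma ln_one_plus_le_tauV_mult_lamV:
  assumes "0 < c" "c < LV V 0"
  shows "ln (1 + c) \<le> tauV V c * lamV V c"
proof -
  have "ln (1 + c) \<le> ln (1 + V (lamV V c))" using le_V_lamV[OF assms] assms by simp
  also have "\<dots> \<le> tauV V c * lamV V c"
    using ln_div_le_tauV[OF assms order.refl] lamV_pos[OF assms] by (simp add: pos_divide_le_eq)
  finally show ?thesis .
qed

lemma tauV_pos:
  assumes "0 < c" "c < LV V 0"
  shows "0 < tauV V c"
proof -
  have "0 < tauV V c * lamV V c"
    using ln_one_plus_le_tauV_mult_lamV[OF assms] assms(1) ln_gt_zero[of "1 + c"] by linarith
  then show ?thesis using lamV_pos[OF assms] by (simp add: zero_less_mult_iff)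
qed

lemma V_le_exp_tauV:
  assumes "0 < c" "c < LV V 0" "lamV V c \<le> l"
  shows "V l \<le> exp (tauV V c * l)"
proof -
  have l: "0 < l" using assms lamV_pos by fastforce
  then have "ln (1 + V l) \<le> tauV V c * l"
    using ln_div_le_tauV[OF assms] by (simp add: pos_divide_le_eq)
  then have "1 + V l \<le> exp (tauV V c * l)"
    using V_nonneg[OF l] by (metis add_pos_nonneg exp_le_cancel_iff exp_ln zero_less_one)
  then show ?thesis by simp
qed

lemma tauV_le_TV:
  assumes c: "0 < c" "c < LV V 0"
  shows "tauV V c \<le> TV V (c / (1 + c))"
proof (rule tauV_le[OF c])
  fix l assume l: "lamV V c \<le> l"
  define T where "T = TV V (c / (1 + c))"
  have "0 < c / (1 + c)" using c by simp
  then have T: "0 \<le> T" "LV V T \<le> c / (1 + c)" using TV_nonneg LV_TV_le by (auto simp: T_def)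
  have lpos: "0 < l" using l lamV_pos[OF c] by simp
  have "V l * exp (- T * l) \<le> c / (1 + c)" using V_mult_exp_le_LV[OF T(1) lpos] T(2) by simp
  then have "V l * (1 + c) \<le> c * exp (T * l)" using c by (simp add: exp_minus field_simps)
  moreover have "c * (1 + V l) \<le> V l * (1 + c)" using le_V_above_lamV[OF c l] by (simp add: algebra_simps)
  ultimately have "c * (1 + V l) \<le> c * exp (T * l)" by linarith
  then have "1 + V l \<le> exp (T * l)" using c by simp
  then have "ln (1 + V l) \<le> ln (exp (T * l))" using V_nonneg[OF lpos] by (subst ln_le_cancel_iff) auto
  then have "ln (1 + V l) \<le> T * l" by simp
  then show "ln (1 + V l) / l \<le> T" using lpos by (simp add: pos_divide_le_eq)
qed

lemma LV_le_below_lamV_plus_tail: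
  assumes c: "0 < c" "c < LV V 0" and t: "0 \<le> t"
  shows "LV V t \<le> c + (\<integral>x. indicator {lamV V c..} x * exp (- t * x) \<partial>dV)"
proof -
  define lam where "lam = lamV V c"
  have lam: "0 < lam" using lamV_pos[OF c] by (simp add: lam_def)
  have int_tail: "integrable dV (\<lambda>x. indicator {lam..} x * exp (- t * x))"
    using t lam by (intro dV.integrable_const_bound[where B=1]) (auto simp: indicator_def mult_nonneg_nonneg)
  have int_head: "integrable dV (indicator {..<lam} :: real \<Rightarrow> real)" by simp
  have "LV V t \<le> (\<integral>x. indicator {..<lam} x + indicator {lam..} x * exp (- t * x) \<partial>dV)"
  proof (rule LV_le_integral)
    show "integrable dV (\<lambda>x. indicator {..<lam} x + indicator {lam..} x * exp (- t * x))"
      by (rule Bochner_Integration.integrable_add[OF int_head int_tail])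
  qed (use t in \<open>auto simp: indicator_def\<close>)
  also have "\<dots> = measure dV {..<lam} + (\<integral>x. indicator {lam..} x * exp (- t * x) \<partial>dV)"
    by (subst Bochner_Integration.integral_add[OF int_head int_tail]) simp
  also have "\<dots> \<le> c + (\<integral>x. indicator {lam..} x * exp (- t * x) \<partial>dV)"
    using measure_dV_below_lamV[OF c] by (simp add: lam_def)
  finally show ?thesis by (simp add: lam_def)
qed

lemma TV_le_tauV_mult:
  assumes c: "0 < c" "c < LV V 0" and A: "0 < A"
  defines "\<alpha> \<equiv> sqrt (tauV V c * lamV V c)"
  shows "TV V (c + (A + \<alpha>) / (A * exp (A * \<alpha>))) \<le> tauV V c * (\<alpha> + A) / \<alpha>"
proof -
  define \<tau> where "\<tau> = tauV V c"
  define lam where "lam = lamV V c"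
  have \<tau>: "0 < \<tau>" and lam: "0 < lam" using tauV_pos[OF c] lamV_pos[OF c] by (simp_all add: \<tau>_def lam_def)
  then have \<alpha>: "0 < \<alpha>" "\<alpha> * \<alpha> = \<tau> * lam" by (simp_all add: \<alpha>_def \<tau>_def lam_def)
  define t where "t = \<tau> * (\<alpha> + A) / \<alpha>"
  have t\<tau>: "t - \<tau> = A * \<tau> / \<alpha>" using \<alpha> by (simp add: t_def field_simps)
  moreover have "0 < A * \<tau> / \<alpha>" using A \<tau> \<alpha> by simp
  ultimately have t: "\<tau> < t" "0 \<le> t" using \<tau> by linarith+
  have "(t - \<tau>) * lam = A * (\<alpha> * \<alpha>) / \<alpha>" by (simp add: t\<tau> \<alpha>(2))
  then have e1: "(t - \<tau>) * lam = A * \<alpha>" using \<alpha>(1) by simp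
  have e2: "t / (t - \<tau>) = (A + \<alpha>) / A" using \<alpha> \<tau> A by (simp add: t\<tau> t_def field_simps)
  have "\<And>s. lam \<le> s \<Longrightarrow> measure dV {lam..s} \<le> exp (\<tau> * s)"
    using measure_dV_atLeastAtMost_le[OF lam] V_le_exp_tauV[OF c] order.trans
    unfolding \<tau>_def lam_def by blast
  then have "(\<integral>x. indicator {lam..} x * exp (- t * x) \<partial>dV) \<le> t / (t - \<tau>) * exp (- (t - \<tau>) * lam)"
    using lam \<tau> t by (intro integral_exp_tail_le dV.finite_measure_axioms) auto
  also have "\<dots> = (A + \<alpha>) / (A * exp (A * \<alpha>))"
    using A by (simp only: e2 mult_minus_left e1) (simp add: exp_minus field_simps)
  finally have "LV V t \<le> c + (A + \<alpha>) / (A * exp (A * \<alpha>))"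
    using LV_le_below_lamV_plus_tail[OF c t(2)] unfolding lam_def by linarith
  then have "TV V (c + (A + \<alpha>) / (A * exp (A * \<alpha>))) \<le> t"
    using c A \<alpha> t by (intro TV_le) (auto intro!: add_pos_nonneg)
  then show ?thesis by (simp add: t_def \<tau>_def)
qed

lemma TV_lower_tauV:
  assumes "0 < c" "c < LV V 0" "0 < A"
  defines "\<alpha> \<equiv> sqrt (tauV V c * lamV V c)"
  shows "\<alpha> / (\<alpha> + A) * TV V (c + (A + \<alpha>) / (A * exp (A * \<alpha>))) \<le> tauV V c"
proof -
  have \<alpha>: "0 < \<alpha>" using tauV_pos[OF assms(1,2)] lamV_pos[OF assms(1,2)] by (simp add: \<alpha>_def)
  then have "\<alpha> / (\<alpha> + A) * TV V (c + (A + \<alpha>) / (A * exp (A * \<alpha>)))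
      \<le> \<alpha> / (\<alpha> + A) * (tauV V c * (\<alpha> + A) / \<alpha>)"
    using TV_le_tauV_mult[OF assms(1-3)] assms(3) by (intro mult_left_mono) (auto simp: \<alpha>_def)
  also have "\<dots> = tauV V c"
  proof -
    have "0 < A * \<alpha> + \<alpha> * \<alpha>" "0 < \<alpha> + A" using \<alpha> assms(3) by (simp_all add: add_pos_pos)
    then show ?thesis using \<alpha> by (simp add: field_simps)
  qed
  finally show ?thesis .
qed

lemma TV_split_le:
  assumes "0 < eps" "0 < c1" "c1 < LV V 0" "0 < c2" "c2 < LV V 0" "0 < B"
  shows "TV V (c1 + c2 * exp (- TV V eps * lamV V c1) + 2 * eps * exp (- B))
    \<le> TV V eps + 2 * B / lamV V c2"
proof -
  define T where "T = TV V eps"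
  define l1 where "l1 = lamV V c1"
  define l2 where "l2 = lamV V c2"
  define K where "K = exp (- T * l1)"
  define t where "t = T + 2 * B / l2"
  have T: "0 \<le> T" "LV V T \<le> eps" using TV_nonneg LV_TV_le assms(1) by (simp_all add: T_def)
  have l2: "0 < l2" using lamV_pos[OF assms(4,5)] by (simp add: l2_def)
  have t: "0 \<le> t" using T l2 assms(6) by (simp add: t_def)
  define h1 where "h1 = (indicator {..<l1} :: real \<Rightarrow> real)"
  define h2 where "h2 = (\<lambda>x. indicator {..<l2} x * K :: real)"
  define h3 where "h3 = (\<lambda>x. indicator {0<..} x * exp (- T * x) * exp (- 2 * B))"
  have int: "integrable dV h1" "integrable dV h2" "integrable dV h3"
    using integrable_LV[OF T(1)] by (simp_all add: h1_def h2_def h3_def)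
  have "LV V t \<le> integral\<^sup>L dV (\<lambda>x. h1 x + h2 x + h3 x)"
  proof (rule LV_le_integral)
    show "integrable dV (\<lambda>x. h1 x + h2 x + h3 x)"
      using int by (intro Bochner_Integration.integrable_add)
    show "0 \<le> h1 x + h2 x + h3 x" for x by (simp add: h1_def h2_def h3_def K_def)
    show "exp (- t * x) \<le> h1 x + h2 x + h3 x" if "0 < x" for x
      using exp_le_three_piece_bound[OF that T(1) l2, of B l1] assms(6) that
      by (simp add: h1_def h2_def h3_def K_def t_def)
  qed (fact t)
  also have "\<dots> = integral\<^sup>L dV h1 + integral\<^sup>L dV h2 + integral\<^sup>L dV h3"
    using int by (simp add: Bochner_Integration.integral_add Bochner_Integration.integrable_add)
  also have "\<dots> = measure dV {..<l1} + measure dV {..<l2} * K + LV V T * exp (- 2 * B)"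
    by (simp add: h1_def h2_def h3_def LV_eq_integral)
  also have "\<dots> \<le> c1 + c2 * K + eps * exp (- 2 * B)"
    using measure_dV_below_lamV[OF assms(2,3)] measure_dV_below_lamV[OF assms(4,5)] T(2)
    by (intro add_mono mult_right_mono) (auto simp: l1_def l2_def K_def)
  also have "\<dots> \<le> c1 + c2 * K + 2 * eps * exp (- B)"
  proof -
    have "exp (- 2 * B) \<le> exp (- B)" using assms(6) by simp
    then have "exp (- 2 * B) \<le> 2 * exp (- B)" using exp_gt_zero[of "- B"] by linarith
    then show ?thesis using assms(1) by (simp add: mult_left_mono)
  qed
  finally have "TV V (c1 + c2 * K + 2 * eps * exp (- B)) \<le> t"
    using assms t by (intro TV_le) (auto simp: K_def intro!: add_pos_pos)
  then show ?thesis by (simp add: t_def T_def K_def l1_def l2_def)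
qed

lemma tauV_double_le_TV:
  assumes "0 < \<delta>" "\<delta> < min (LV V 0) 1 / 2"
  shows "tauV V (2 * \<delta>) \<le> TV V \<delta>"
proof -
  have "tauV V (2 * \<delta>) \<le> TV V (2 * \<delta> / (1 + 2 * \<delta>))" using tauV_le_TV[of "2 * \<delta>"] assms by simp
  also have "\<dots> \<le> TV V \<delta>" using assms by (intro TV_antimono) (auto simp: field_simps)
  finally show ?thesis .
qed

lemma TV_le_tauV_half:
  assumes \<delta>: "0 < \<delta>" "\<delta> < min (LV V 0) 1 / 2"
  shows "TV V \<delta> \<le> 6 / \<delta>\<^sup>2 * tauV V (\<delta> / 2)"
proof -
  define c where "c = \<delta> / 2"
  have c: "0 < c" "c < LV V 0" using \<delta> by (auto simp: c_def)
  define \<alpha> where "\<alpha> = sqrt (tauV V c * lamV V c)"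
  define r where "r = 6 / \<delta>\<^sup>2"
  define A where "A = (r - 1) * \<alpha>"
  have \<alpha>: "0 < \<alpha>" "\<alpha> * \<alpha> = tauV V c * lamV V c"
    using tauV_pos[OF c] lamV_pos[OF c] by (simp_all add: \<alpha>_def)
  have "\<delta> * \<delta> < 1 * 1" using \<delta> by (intro mult_strict_mono) auto
  then have r: "1 < r" using \<delta> by (simp add: r_def field_simps power2_eq_square)
  then have A: "0 < A" using \<alpha> by (simp add: A_def)
  have "2 * \<delta> / 5 \<le> c / (1 + c)" using \<delta> by (simp add: c_def field_simps)
  also have "\<dots> \<le> \<alpha> * \<alpha>"
    using div_one_plus_le_ln_one_plus[of c] c(1) ln_one_plus_le_tauV_mult_lamV[OF c] \<alpha> by simp
  finally have "r / (r - 1) / exp ((r - 1) * (\<alpha> * \<alpha>)) \<le> \<delta> / 2"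
    using six_div_square_exp_estimate \<delta> by (simp add: r_def)
  moreover have "(A + \<alpha>) / (A * exp (A * \<alpha>)) = r / (r - 1) / exp ((r - 1) * (\<alpha> * \<alpha>))"
    using \<alpha>(1) r by (simp add: A_def field_simps)
  ultimately have "(A + \<alpha>) / (A * exp (A * \<alpha>)) \<le> \<delta> / 2" by simp
  moreover have "0 < (A + \<alpha>) / (A * exp (A * \<alpha>))" using A \<alpha> by simp
  moreover have "c + (A + \<alpha>) / (A * exp (A * \<alpha>)) \<le> \<delta>"
    using \<open>(A + \<alpha>) / (A * exp (A * \<alpha>)) \<le> \<delta> / 2\<close> unfolding c_def by linarith
  ultimately have "TV V \<delta> \<le> TV V (c + (A + \<alpha>) / (A * exp (A * \<alpha>)))"
    using c by (intro TV_antimono) auto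
  also have "\<dots> \<le> tauV V c * (\<alpha> + A) / \<alpha>"
    using TV_le_tauV_mult[OF c A] by (simp add: \<alpha>_def)
  also have "\<dots> = 6 / \<delta>\<^sup>2 * tauV V (\<delta> / 2)"
    using \<alpha> by (simp add: A_def r_def c_def algebra_simps)
  finally show ?thesis .
qed

end

theorem proposition2p6:
  fixes V :: "real \<Rightarrow> real" and eps c c1 c2 :: real
  assumes "classV V"
    and "0 < eps" "eps < LV V 0"
    and "0 < c" "c < LV V 0"
    and "0 < c1" "c1 < LV V 0"
    and "0 < c2" "c2 < LV V 0"
  defines "\<alpha> \<equiv> sqrt (tauV V c * lamV V c)"
  shows "(\<forall>A>0. \<alpha> / (\<alpha> + A) * TV V (c + (A + \<alpha>) / (A * exp (A * \<alpha>))) \<le> tauV V c)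
    \<and> tauV V c \<le> TV V (c / (1 + c))
    \<and> (\<forall>B>0. TV V (c1 + c2 * exp (- TV V eps * lamV V c1) + 2 * eps * exp (- B))
              \<le> TV V eps + 2 * B / lamV V c2)
    \<and> (\<forall>\<delta>. 0 < \<delta> \<and> \<delta> < min (LV V 0) 1 / 2 \<longrightarrow>
          tauV V (2 * \<delta>) \<le> TV V \<delta> \<and> TV V \<delta> \<le> 6 / \<delta>\<^sup>2 * tauV V (\<delta> / 2))"
proof -
  interpret classV_fun V by standard fact
  have "\<forall>A>0. \<alpha> / (\<alpha> + A) * TV V (c + (A + \<alpha>) / (A * exp (A * \<alpha>))) \<le> tauV V c"
    using TV_lower_tauV assms(4,5) unfolding \<alpha>_def by blast
  moreover have "tauV V c \<le> TV V (c / (1 + c))"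
    using tauV_le_TV assms(4,5) .
  moreover have "\<forall>B>0. TV V (c1 + c2 * exp (- TV V eps * lamV V c1) + 2 * eps * exp (- B))
      \<le> TV V eps + 2 * B / lamV V c2"
    using TV_split_le assms(2,6-9) by blast
  moreover have "\<forall>\<delta>. 0 < \<delta> \<and> \<delta> < min (LV V 0) 1 / 2 \<longrightarrow>
      tauV V (2 * \<delta>) \<le> TV V \<delta> \<and> TV V \<delta> \<le> 6 / \<delta>\<^sup>2 * tauV V (\<delta> / 2)"
    using tauV_double_le_TV TV_le_tauV_half by blast
  ultimately show ?thesis by blast
qed

end
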